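(* Let $\alpha,\beta,\sigma>0$ and let $X\sim\mathcal{N}(\alpha,\sigma^2)$. Then $$\mathbb{E}\left[\tanh'\left(\frac{\beta X}{\sigma^2}\right) X\right]\ge 0,$$ where $\tanh'$ denotes the derivative of the hyperbolic tangent. *)

theory Defs
  imports "HOL-Probability.Probability"
begin

end

theory Submission
  imports Defs
begin

text \<open>
  The density \<open>p\<close> of \<open>X\<close> satisfies \<open>p x \<ge> p (-x)\<close> for \<open>x \<ge> 0\<close>, because
  a positive mean puts \<open>x\<close> closer to the mean than \<open>-x\<close>. The weight \<open>tanh'(\<beta> x / \<sigma>\<^sup>2)\<close> is even and
  nonnegative, so pairing \<open>x\<close> with \<open>-x\<close> in the integral of \<open>p x \<cdot> tanh'(\<beta> x / \<sigma>\<^sup>2) \<cdot> x\<close> gives the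
  integrand \<open>tanh'(\<beta> x / \<sigma>\<^sup>2) \<cdot> x \<cdot> (p x - p (-x)) \<ge> 0\<close>.
\<close>

lemma deriv_tanh_real: "deriv tanh (x::real) = 1 - tanh x ^ 2"
proof -
  have "cosh x \<noteq> 0" using cosh_real_pos[of x] by simp
  then have "(tanh has_field_derivative 1 - tanh x ^ 2) (at x)"
    by (auto intro!: derivative_eq_intros)
  then show ?thesis by (rule DERIV_imp_deriv)
qed

lemma deriv_tanh_real_nonneg: "0 \<le> deriv tanh (x::real)"
proof -
  have "\<bar>tanh x\<bar> \<le> 1" using tanh_real_bounds[of x] by auto
  then show ?thesis by (simp add: deriv_tanh_real abs_square_le_1)
qed

lemma deriv_tanh_real_minus: "deriv tanh (- x) = deriv tanh (x::real)"
  by (simp add: deriv_tanh_real)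

lemma continuous_on_deriv_tanh_real: "continuous_on UNIV (deriv tanh :: real \<Rightarrow> real)"
proof -
  have "\<And>x::real. cosh x \<noteq> 0" using cosh_real_pos by (metis less_irrefl)
  then have "continuous_on UNIV (\<lambda>x::real. 1 - tanh x ^ 2)"
    by (intro continuous_intros) auto
  then show ?thesis by (simp add: deriv_tanh_real[abs_def])
qed

lemma lborel_integral_nonneg_if_symmetrization_nonneg:
  fixes f :: "real \<Rightarrow> real"
  assumes "\<And>x. 0 \<le> f x + f (- x)"
  shows "0 \<le> integral\<^sup>L lborel f"
proof (cases "integrable lborel f")
  case True
  have reflected: "integrable lborel (\<lambda>x. f (- x))"
    using lborel_integrable_real_affine[OF True, of "-1" 0] by simp
  have "integral\<^sup>L lborel (\<lambda>x. f (- x)) = integral\<^sup>L lborel f"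
    using lborel_integral_real_affine[of "-1" f 0] by simp
  then have "2 * integral\<^sup>L lborel f = integral\<^sup>L lborel (\<lambda>x. f x + f (- x))"
    using Bochner_Integration.integral_add[OF True reflected] by simp
  also have "\<dots> \<ge> 0"
    using assms by (intro integral_nonneg_AE) auto
  finally show ?thesis by simp
next
  case False
  then show ?thesis by (simp add: not_integrable_integral_eq)
qed

lemma normal_density_minus_le:
  assumes "0 \<le> \<mu>" and "0 \<le> x"
  shows "normal_density \<mu> \<sigma> (- x) \<le> normal_density \<mu> \<sigma> x"
proof -
  have "(x - \<mu>)\<^sup>2 \<le> (- x - \<mu>)\<^sup>2"
    using assms by (simp add: power2_eq_square algebra_simps)
  then have "- (- x - \<mu>)\<^sup>2 / (2 * \<sigma>\<^sup>2) \<le> - (x - \<mu>)\<^sup>2 / (2 * \<sigma>\<^sup>2)"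
    by (simp add: divide_right_mono)
  then show ?thesis
    unfolding normal_density_def by (intro mult_left_mono) auto
qed

lemma normal_density_odd_part_sign:
  assumes "0 \<le> \<mu>"
  shows "0 \<le> x * (normal_density \<mu> \<sigma> x - normal_density \<mu> \<sigma> (- x))"
proof (cases "0 \<le> x")
  case True
  then show ?thesis using normal_density_minus_le[OF assms True] by simp
next
  case False
  then have "normal_density \<mu> \<sigma> x \<le> normal_density \<mu> \<sigma> (- x)"
    using normal_density_minus_le[OF assms, of "- x"] by simp
  then show ?thesis using False by (simp add: mult_nonpos_nonpos)
qed

lemma integral_normal_density_even_weight_nonneg:
  fixes w :: "real \<Rightarrow> real"
  assumes "0 \<le> \<mu>" and even: "\<And>x. w (- x) = w x" and nonneg: "\<And>x. 0 \<le> w x"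
  shows "0 \<le> (\<integral>x. normal_density \<mu> \<sigma> x * (w x * x) \<partial>lborel)"
proof (rule lborel_integral_nonneg_if_symmetrization_nonneg)
  fix x :: real
  have "normal_density \<mu> \<sigma> x * (w x * x) + normal_density \<mu> \<sigma> (- x) * (w (- x) * - x)
      = w x * (x * (normal_density \<mu> \<sigma> x - normal_density \<mu> \<sigma> (- x)))"
    by (simp add: even algebra_simps)
  also have "\<dots> \<ge> 0"
    using nonneg normal_density_odd_part_sign[OF assms(1)] by simp
  finally show "0 \<le> normal_density \<mu> \<sigma> x * (w x * x) + normal_density \<mu> \<sigma> (- x) * (w (- x) * - x)" .
qed

theorem lemma1:
  fixes M :: "'a measure" and X :: "'a \<Rightarrow> real"
    and \<alpha> \<beta> \<sigma> :: real
  assumes "prob_space M"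
    and "\<alpha> > 0" and "\<beta> > 0" and "\<sigma> > 0"
    and "distributed M lborel X (normal_density \<alpha> \<sigma>)"
  shows "prob_space.expectation M (\<lambda>\<omega>. deriv tanh (\<beta> * X \<omega> / \<sigma>\<^sup>2) * X \<omega>) \<ge> 0"
proof -
  define w where "w y = deriv tanh (\<beta> * y / \<sigma>\<^sup>2)" for y
  have "continuous_on UNIV (\<lambda>y. w y * y)"
    unfolding w_def using assms(4)
    by (intro continuous_intros continuous_on_compose2[OF continuous_on_deriv_tanh_real]) auto
  then have "(\<lambda>y. w y * y) \<in> borel_measurable lborel"
    using borel_measurable_continuous_onI by simp
  then have "prob_space.expectation M (\<lambda>\<omega>. w (X \<omega>) * X \<omega>)
      = (\<integral>y. normal_density \<alpha> \<sigma> y * (w y * y) \<partial>lborel)"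
    using distributed_integral[OF assms(5)] normal_density_nonneg by simp
  also have "\<dots> \<ge> 0"
    using assms(2) by (intro integral_normal_density_even_weight_nonneg)
      (simp_all add: w_def deriv_tanh_real_nonneg deriv_tanh_real_minus)
  finally show ?thesis by (simp add: w_def)
qed

end
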